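(* Let $M$ and $M'$ be two stable matchings in an instance $I$ of SPA-S, and let $M^\land$ be the assignment defined from $M,M'$ in the context. If a project $p_j$ is undersubscribed in $M^\land$, then $p_j$ is undersubscribed in at least one of $M$ and $M'$.
   Context: An instance $I$ of SPA-S consists of a finite set $\mathcal{S}$ of students, a finite set $\mathcal{P}$ of projects and a finite set $\mathcal{L}$ of lecturers. Each student $s_i$ ranks a subset $A_i\subseteq\mathcal{P}$ (its acceptable projects) in strict order. Each project is offered by exactly one lecturer; lecturer $l_k$ offers a nonempty set $P_k\subseteq\mathcal{P}$, the $P_k$ partitioning $\mathcal{P}$. Each lecturer $l_k$ ranks in strict order the students who find at least one project of $P_k$ acceptable. Projects have capacities $c_j\in\mathbb{Z}^+$, lecturers have capacities $d_k\in\mathbb{Z}^+$ with $\max\{c_j:p_j\in P_k\}\le d_k\le\sum\{c_j:p_j\in P_k\}$. A pair $(s_i,p_j)$, $p_j$ offered by $l_k$, is acceptable if $p_j\in A_i$ and $s_i$ is on $l_k$'s list. A matching $M$ is a set of acceptable pairs with each student in at most one pair, $|M(p_j)|\le c_j$, $|M(l_k)|\le d_k$, where for an assignment $M$ (a set of acceptable pairs), $M(s_i)$, $M(p_j)$, $M(l_k)$ denote the project of $s_i$, the students assigned to $p_j$, and the students assigned to projects of $l_k$. Undersubscribed/full means fewer than/exactly capacity many assigned students. An acceptable pair $(s_i,p_j)\notin M$ ($p_j$ offered by $l_k$) blocks $M$ if ($s_i$ is unassigned or prefers $p_j$ to $M(s_i)$) and one of: (P1) $p_j$ and $l_k$ undersubscribed;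 (P2) $p_j$ undersubscribed, $l_k$ full, $s_i\in M(l_k)$; (P3) $p_j$ undersubscribed, $l_k$ full, $l_k$ prefers $s_i$ to the worst student of $M(l_k)$; (P4) $p_j$ full and $l_k$ prefers $s_i$ to the worst student of $M(p_j)$. $M$ is stable if it has no blocking pair. Given stable matchings $M,M'$, $M^\land$ is the assignment in which each student unassigned in both $M$ and $M'$ is unassigned, each student assigned to the same project in both is assigned to that project, and every other student is assigned to the better (in her preference) of her projects in $M$ and $M'$. *)

theory Defs
  imports Main
begin

text \<open>A s: acceptable projects of student s.
  sp s p q: student s strictly prefers p to q (a strict total order on A s).
  lec p: the lecturer offering p.
  lp l s t: lecturer l strictly prefers s to t (a strict total order on l's list).
  c p, d l: capacities.\<close>

definition strict_total_on :: "'a set \<Rightarrow> ('a \<Rightarrow> 'a \<Rightarrow> bool) \<Rightarrow> bool" where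
  "strict_total_on X r \<longleftrightarrow>
     (\<forall>x\<in>X. \<not> r x x) \<and>
     (\<forall>x\<in>X. \<forall>y\<in>X. \<forall>z\<in>X. r x y \<longrightarrow> r y z \<longrightarrow> r x z) \<and>
     (\<forall>x\<in>X. \<forall>y\<in>X. x \<noteq> y \<longrightarrow> r x y \<or> r y x) \<and>
     (\<forall>x y. r x y \<longrightarrow> x \<in> X \<and> y \<in> X)"

definition offered :: "'p set \<Rightarrow> ('p \<Rightarrow> 'l) \<Rightarrow> 'l \<Rightarrow> 'p set" where
  "offered P lec l = {p \<in> P. lec p = l}"

definition lec_list :: "'s set \<Rightarrow> 'p set \<Rightarrow> ('s \<Rightarrow> 'p set) \<Rightarrow> ('p \<Rightarrow> 'l) \<Rightarrow> 'l \<Rightarrow> 's set" where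
  "lec_list S P A lec l = {s \<in> S. A s \<inter> offered P lec l \<noteq> {}}"

definition spa_instance ::
  "'s set \<Rightarrow> 'p set \<Rightarrow> 'l set \<Rightarrow> ('s \<Rightarrow> 'p set) \<Rightarrow> ('s \<Rightarrow> 'p \<Rightarrow> 'p \<Rightarrow> bool)
   \<Rightarrow> ('p \<Rightarrow> 'l) \<Rightarrow> ('l \<Rightarrow> 's \<Rightarrow> 's \<Rightarrow> bool) \<Rightarrow> ('p \<Rightarrow> nat) \<Rightarrow> ('l \<Rightarrow> nat) \<Rightarrow> bool" where
  "spa_instance S P L A sp lec lp c d \<longleftrightarrow>
     finite S \<and> finite P \<and> finite L \<and>
     (\<forall>s\<in>S. A s \<subseteq> P \<and> strict_total_on (A s) (sp s)) \<and>
     (\<forall>p\<in>P. lec p \<in> L \<and> c p > 0) \<and>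
     (\<forall>l\<in>L. offered P lec l \<noteq> {} \<and> d l > 0 \<and>
        strict_total_on (lec_list S P A lec l) (lp l) \<and>
        (\<forall>p\<in>offered P lec l. c p \<le> d l) \<and>
        d l \<le> (\<Sum>p\<in>offered P lec l. c p))"

definition acceptable ::
  "'s set \<Rightarrow> 'p set \<Rightarrow> ('s \<Rightarrow> 'p set) \<Rightarrow> ('p \<Rightarrow> 'l) \<Rightarrow> 's \<Rightarrow> 'p \<Rightarrow> bool" where
  "acceptable S P A lec s p \<longleftrightarrow> s \<in> S \<and> p \<in> P \<and> p \<in> A s \<and> s \<in> lec_list S P A lec (lec p)"

definition students_of_p :: "('s \<times> 'p) set \<Rightarrow> 'p \<Rightarrow> 's set" where
  "students_of_p M p = {s. (s, p) \<in> M}"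

definition students_of_l :: "('s \<times> 'p) set \<Rightarrow> ('p \<Rightarrow> 'l) \<Rightarrow> 'l \<Rightarrow> 's set" where
  "students_of_l M lec l = {s. \<exists>p. (s, p) \<in> M \<and> lec p = l}"

definition is_assigned :: "('s \<times> 'p) set \<Rightarrow> 's \<Rightarrow> bool" where
  "is_assigned M s \<longleftrightarrow> (\<exists>p. (s, p) \<in> M)"

definition matching ::
  "'s set \<Rightarrow> 'p set \<Rightarrow> ('s \<Rightarrow> 'p set) \<Rightarrow> ('p \<Rightarrow> 'l) \<Rightarrow> ('p \<Rightarrow> nat) \<Rightarrow> ('l \<Rightarrow> nat)
   \<Rightarrow> ('s \<times> 'p) set \<Rightarrow> bool" where
  "matching S P A lec c d M \<longleftrightarrow>
     (\<forall>(s, p)\<in>M. acceptable S P A lec s p) \<and>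
     (\<forall>s p q. (s, p) \<in> M \<longrightarrow> (s, q) \<in> M \<longrightarrow> p = q) \<and>
     (\<forall>p. card (students_of_p M p) \<le> c p) \<and>
     (\<forall>l. card (students_of_l M lec l) \<le> d l)"

definition prefers_to_worst :: "('s \<Rightarrow> 's \<Rightarrow> bool) \<Rightarrow> 's \<Rightarrow> 's set \<Rightarrow> bool" where
  "prefers_to_worst r s X \<longleftrightarrow>
     (\<exists>w\<in>X. (\<forall>t\<in>X. t \<noteq> w \<longrightarrow> r t w) \<and> r s w)"

definition blocking ::
  "'s set \<Rightarrow> 'p set \<Rightarrow> ('s \<Rightarrow> 'p set) \<Rightarrow> ('s \<Rightarrow> 'p \<Rightarrow> 'p \<Rightarrow> bool)
   \<Rightarrow> ('p \<Rightarrow> 'l) \<Rightarrow> ('l \<Rightarrow> 's \<Rightarrow> 's \<Rightarrow> bool) \<Rightarrow> ('p \<Rightarrow> nat) \<Rightarrow> ('l \<Rightarrow> nat)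
   \<Rightarrow> ('s \<times> 'p) set \<Rightarrow> 's \<Rightarrow> 'p \<Rightarrow> bool" where
  "blocking S P A sp lec lp c d M s p \<longleftrightarrow>
     (let l = lec p; Mp = students_of_p M p; Ml = students_of_l M lec l in
     acceptable S P A lec s p \<and> (s, p) \<notin> M \<and>
     (\<not> is_assigned M s \<or> (\<exists>q. (s, q) \<in> M \<and> sp s p q)) \<and>
     ((card Mp < c p \<and> card Ml < d l) \<or>
      (card Mp < c p \<and> card Ml = d l \<and> s \<in> Ml) \<or>
      (card Mp < c p \<and> card Ml = d l \<and> prefers_to_worst (lp l) s Ml) \<or>
      (card Mp = c p \<and> prefers_to_worst (lp l) s Mp)))"

definition stable ::
  "'s set \<Rightarrow> 'p set \<Rightarrow> ('s \<Rightarrow> 'p set) \<Rightarrow> ('s \<Rightarrow> 'p \<Rightarrow> 'p \<Rightarrow> bool)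
   \<Rightarrow> ('p \<Rightarrow> 'l) \<Rightarrow> ('l \<Rightarrow> 's \<Rightarrow> 's \<Rightarrow> bool) \<Rightarrow> ('p \<Rightarrow> nat) \<Rightarrow> ('l \<Rightarrow> nat)
   \<Rightarrow> ('s \<times> 'p) set \<Rightarrow> bool" where
  "stable S P A sp lec lp c d M \<longleftrightarrow>
     matching S P A lec c d M \<and> (\<forall>s p. \<not> blocking S P A sp lec lp c d M s p)"

text \<open>M-wedge: each student gets the better of her projects in M and M'
  (the common one if equal; unassigned if unassigned in both; if assigned in only one
  of them, that project, the paper's convention that any project beats being unassigned).\<close>
definition meet_assignment ::
  "('s \<Rightarrow> 'p \<Rightarrow> 'p \<Rightarrow> bool) \<Rightarrow> ('s \<times> 'p) set \<Rightarrow> ('s \<times> 'p) set \<Rightarrow> ('s \<times> 'p) set" where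
  "meet_assignment sp M M' =
     {(s, p). ((s, p) \<in> M \<and> (s, p) \<in> M') \<or>
              ((s, p) \<in> M \<and> \<not> is_assigned M' s) \<or>
              ((s, p) \<in> M' \<and> \<not> is_assigned M s) \<or>
              ((s, p) \<in> M \<and> (\<exists>q. (s, q) \<in> M' \<and> sp s p q)) \<or>
              ((s, p) \<in> M' \<and> (\<exists>q. (s, q) \<in> M \<and> sp s p q))}"

end

theory Submission
  imports Defs
begin

text \<open>Call a student better off if she prefers her project in M' to her project in M
  (or is unassigned in M). Fix a lecturer k. If some better-off student is assigned in M' to a
  project of k that is undersubscribed in M, stability of M makes k full in M; otherwise every
  such project is full in M. In either case stability of both matchings lets us compare the
  students moving between the projects of k and conclude that k has at most as many
  better-off students in M' as in M. Summed over all lecturers, the M'-side counts every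
  better-off student and the M-side at most every one, so equality holds for each lecturer.
  If p were full in M and in M' but not in the meet, some student of p in M is better off
  (she leaves p for her M'-project) and some student of p in M' is not (she leaves p for her
  M-project); this exchange at p makes the inequality strict for the lecturer of p.\<close>

lemma strict_total_on_asym: "strict_total_on X r \<Longrightarrow> r x y \<Longrightarrow> \<not> r y x"
  unfolding strict_total_on_def by blast

lemma strict_total_on_total:
  "strict_total_on X r \<Longrightarrow> x \<in> X \<Longrightarrow> y \<in> X \<Longrightarrow> x \<noteq> y \<Longrightarrow> r x y \<or> r y x"
  unfolding strict_total_on_def by blast

lemma strict_total_on_trans: "strict_total_on X r \<Longrightarrow> r x y \<Longrightarrow> r y z \<Longrightarrow> r x z"
  unfolding strict_total_on_def by blast

lemma strict_total_on_ex_worst: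
  assumes r: "strict_total_on X r" and "finite Y" "Y \<noteq> {}" "Y \<subseteq> X"
  shows "\<exists>w\<in>Y. \<forall>t\<in>Y. t \<noteq> w \<longrightarrow> r t w"
  using assms(2-4)
proof (induction Y rule: finite_ne_induct)
  case (singleton x)
  then show ?case by auto
next
  case (insert x Y)
  then obtain w where w: "w \<in> Y" "\<forall>t\<in>Y. t \<noteq> w \<longrightarrow> r t w"
    by auto
  show ?case
  proof (cases "r x w")
    case True
    with w show ?thesis by auto
  next
    case False
    with insert w strict_total_on_total[OF r, of x w] have "r w x"
      by auto
    with w strict_total_on_trans[OF r] show ?thesis
      by (metis insert_iff)
  qed
qed

lemma not_prefers_to_worstD:
  assumes r: "strict_total_on X r" and Y: "finite Y" "Y \<noteq> {}" "Y \<subseteq> X"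
    and "t \<in> X" "t \<notin> Y" "\<not> prefers_to_worst r t Y" "y \<in> Y"
  shows "r y t"
proof -
  obtain w where w: "w \<in> Y" "\<forall>t\<in>Y. t \<noteq> w \<longrightarrow> r t w"
    using strict_total_on_ex_worst[OF r Y] by blast
  with assms have "\<not> r t w" "t \<noteq> w"
    unfolding prefers_to_worst_def by auto
  with w assms strict_total_on_total[OF r, of t w] have "r w t"
    by auto
  with w \<open>y \<in> Y\<close> strict_total_on_trans[OF r] show ?thesis
    by metis
qed

lemma finite_students_of_p: "finite N \<Longrightarrow> finite (students_of_p N p)"
  by (rule finite_subset[of _ "fst ` N"]) (force simp: students_of_p_def)+

lemma finite_students_of_l: "finite N \<Longrightarrow> finite (students_of_l N lec l)"
  by (rule finite_subset[of _ "fst ` N"]) (force simp: students_of_l_def)+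

lemma students_of_p_subset_students_of_l: "students_of_p N p \<subseteq> students_of_l N lec (lec p)"
  by (auto simp: students_of_p_def students_of_l_def)

lemma card_UN_arrivals_le_leavers:
  assumes "single_valued N" "finite N" "finite R"
    and "\<And>r. r \<in> R \<Longrightarrow> card (students_of_p N' r) \<le> card (students_of_p N r)"
  shows "card (\<Union>r\<in>R. students_of_p N' r - students_of_p N r)
    \<le> card (\<Union>r\<in>R. students_of_p N r - students_of_p N' r)"
proof -
  have "card (\<Union>r\<in>R. students_of_p N' r - students_of_p N r)
      \<le> (\<Sum>r\<in>R. card (students_of_p N' r - students_of_p N r))"
    using \<open>finite R\<close> by (rule card_UN_le)
  also have "\<dots> \<le> (\<Sum>r\<in>R. card (students_of_p N r - students_of_p N' r))"
  proof (rule sum_mono)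
    fix r assume "r \<in> R"
    with assms show "card (students_of_p N' r - students_of_p N r)
        \<le> card (students_of_p N r - students_of_p N' r)"
      by (simp add: card_Diff_subset_Int finite_students_of_p Int_commute diff_le_mono)
  qed
  also have "\<dots> = card (\<Union>r\<in>R. students_of_p N r - students_of_p N' r)"
    using assms(1-3) finite_students_of_p[OF \<open>finite N\<close>]
    by (subst card_UN_disjoint) (auto simp: students_of_p_def dest: single_valuedD)
  finally show ?thesis .
qed

lemma card_le_by_transfer:
  assumes sv: "single_valued N" "single_valued N'" and fin: "finite N" "finite N'" "finite Y"
    and moved: "\<forall>t\<in>X. \<exists>r. (t, r) \<in> N' \<and> (t, r) \<notin> N \<and>
      card (students_of_p N' r) \<le> card (students_of_p N r) \<and>
      students_of_p N r - students_of_p N' r \<subseteq> Y"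
  shows "card X \<le> card Y"
    and "(u, p) \<in> N' \<Longrightarrow> (u, p) \<notin> N \<Longrightarrow> u \<notin> X \<Longrightarrow>
      (s, p) \<in> N \<Longrightarrow> (s, p) \<notin> N' \<Longrightarrow> s \<in> Y \<Longrightarrow> card X < card Y"
proof -
  define R where "R = {r. \<exists>t\<in>X. (t, r) \<in> N' \<and> (t, r) \<notin> N}"
  define arrivals where "arrivals = (\<Union>r\<in>R. students_of_p N' r - students_of_p N r)"
  define leavers where "leavers = (\<Union>r\<in>R. students_of_p N r - students_of_p N' r)"
  have R: "card (students_of_p N' r) \<le> card (students_of_p N r)"
    "students_of_p N r - students_of_p N' r \<subseteq> Y" if "r \<in> R" for r
    using that moved sv(2) by (auto simp: R_def dest: single_valuedD)
  have "finite R"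
    by (rule finite_subset[of _ "snd ` N'"]) (force simp: R_def fin)+
  have X_arrivals: "X \<subseteq> arrivals"
    using moved by (force simp: arrivals_def R_def students_of_p_def)
  have leavers_Y: "leavers \<subseteq> Y"
    using R by (auto simp: leavers_def)
  have fin_arrivals: "finite arrivals"
    using \<open>finite R\<close> fin by (simp add: arrivals_def finite_students_of_p)
  have arrivals_leavers: "card arrivals \<le> card leavers"
    unfolding arrivals_def leavers_def
    using sv(1) fin(1) \<open>finite R\<close> R(1) by (rule card_UN_arrivals_le_leavers)
  have X_le: "card X \<le> card arrivals" and leavers_le: "card leavers \<le> card Y"
    using card_mono[OF fin_arrivals X_arrivals] card_mono[OF fin(3) leavers_Y] .
  then show "card X \<le> card Y"
    using arrivals_leavers by linarith
  assume u: "(u, p) \<in> N'" "(u, p) \<notin> N" "u \<notin> X" and s: "(s, p) \<in> N" "(s, p) \<notin> N'" "s \<in> Y"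
  show "card X < card Y"
  proof (cases "p \<in> R")
    case True
    with u have "X \<subset> arrivals"
      using X_arrivals by (auto simp: arrivals_def students_of_p_def)
    then have "card X < card arrivals"
      by (rule psubset_card_mono[OF fin_arrivals])
    then show ?thesis
      using arrivals_leavers leavers_le by linarith
  next
    case False
    with s sv(1) have "leavers \<subset> Y"
      using leavers_Y by (auto simp: leavers_def students_of_p_def dest: single_valuedD)
    then have "card leavers < card Y"
      by (rule psubset_card_mono[OF fin(3)])
    then show ?thesis
      using arrivals_leavers X_le by linarith
  qed
qed

lemma card_Int_Diff_Diff:
  assumes "finite Z" "C \<subseteq> Z" "C \<inter> B = {}"
  shows "card Z = card (B \<inter> Z) + card C + card (Z - B - C)"
proof -
  have C: "C \<subseteq> Z - B" "finite C"
    using assms by (auto intro: finite_subset)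
  have "card Z = card (Z \<inter> B) + card (Z - B)"
    using assms(1) by (rule card_Int_Diff)
  moreover have "card (Z - B) = card C + card (Z - B - C)"
    using C assms(1) card_mono[of "Z - B" C] by (simp add: card_Diff_subset)
  ultimately show ?thesis
    by (simp add: Int_commute)
qed

lemma sum_card_students_of_l:
  assumes "single_valued N" "finite N" "finite L" "\<And>s p. (s, p) \<in> N \<Longrightarrow> lec p \<in> L"
  shows "(\<Sum>k\<in>L. card (X \<inter> students_of_l N lec k)) = card (X \<inter> Domain N)"
proof -
  have "X \<inter> Domain N = (\<Union>k\<in>L. X \<inter> students_of_l N lec k)"
    using assms(4) by (auto simp: students_of_l_def)
  moreover have "card (\<Union>k\<in>L. X \<inter> students_of_l N lec k) = (\<Sum>k\<in>L. card (X \<inter> students_of_l N lec k))"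
  proof (rule card_UN_disjoint)
    show "\<forall>k\<in>L. finite (X \<inter> students_of_l N lec k)"
      using finite_students_of_l[OF assms(2)] by (metis finite_Int)
  qed (use assms(1,3) in \<open>auto simp: students_of_l_def dest: single_valuedD\<close>)
  ultimately show ?thesis by simp
qed

definition improves :: "('s \<Rightarrow> 'p \<Rightarrow> 'p \<Rightarrow> bool) \<Rightarrow> ('s \<times> 'p) set \<Rightarrow> 's \<Rightarrow> 'p \<Rightarrow> bool" where
  "improves sp M s p \<longleftrightarrow> (s, p) \<notin> M \<and> (\<not> is_assigned M s \<or> (\<exists>q. (s, q) \<in> M \<and> sp s p q))"

definition better_off ::
  "('s \<Rightarrow> 'p \<Rightarrow> 'p \<Rightarrow> bool) \<Rightarrow> ('s \<times> 'p) set \<Rightarrow> ('s \<times> 'p) set \<Rightarrow> 's \<Rightarrow> bool" where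
  "better_off sp M M' s \<longleftrightarrow> (\<exists>q. (s, q) \<in> M' \<and> improves sp M s q)"

lemma better_off_improves:
  "single_valued M' \<Longrightarrow> better_off sp M M' s \<Longrightarrow> (s, q) \<in> M' \<Longrightarrow> improves sp M s q"
  unfolding better_off_def by (auto dest: single_valuedD)

lemma meet_assignment_subset: "meet_assignment sp M M' \<subseteq> M \<union> M'"
  by (auto simp: meet_assignment_def)

lemma meet_leaver_not_better_off:
  assumes "single_valued M" "single_valued M'"
    and "(u, p) \<in> M'" "(u, p) \<notin> meet_assignment sp M M'"
  shows "(u, p) \<notin> M" and "\<not> better_off sp M M' u"
proof -
  from assms(3,4) show "(u, p) \<notin> M"
    by (simp add: meet_assignment_def)
  from assms(3,4) obtain q where q: "(u, q) \<in> M" "\<not> sp u p q"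
    by (auto simp: meet_assignment_def is_assigned_def)
  show "\<not> better_off sp M M' u"
  proof
    assume "better_off sp M M' u"
    with assms(2,3) have "improves sp M u p"
      using better_off_improves by metis
    with q assms(1) show False
      unfolding improves_def is_assigned_def by (auto dest: single_valuedD)
  qed
qed

locale spa =
  fixes S :: "'s set" and P :: "'p set" and L :: "'l set" and A :: "'s \<Rightarrow> 'p set"
    and sp :: "'s \<Rightarrow> 'p \<Rightarrow> 'p \<Rightarrow> bool" and lec :: "'p \<Rightarrow> 'l"
    and lp :: "'l \<Rightarrow> 's \<Rightarrow> 's \<Rightarrow> bool" and c :: "'p \<Rightarrow> nat" and d :: "'l \<Rightarrow> nat"
  assumes spa_instance: "spa_instance S P L A sp lec lp c d"
begin

abbreviation is_matching :: "('s \<times> 'p) set \<Rightarrow> bool" where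
  "is_matching M \<equiv> matching S P A lec c d M"

abbreviation is_stable :: "('s \<times> 'p) set \<Rightarrow> bool" where
  "is_stable M \<equiv> stable S P A sp lec lp c d M"

lemma finite_L: "finite L"
  and lecturer_in_L: "p \<in> P \<Longrightarrow> lec p \<in> L"
  and project_capacity_pos: "p \<in> P \<Longrightarrow> 0 < c p"
  and lecturer_capacity_pos: "k \<in> L \<Longrightarrow> 0 < d k"
  and student_pref: "s \<in> S \<Longrightarrow> strict_total_on (A s) (sp s)"
  and lecturer_pref: "k \<in> L \<Longrightarrow> strict_total_on (lec_list S P A lec k) (lp k)"
  using spa_instance unfolding spa_instance_def by simp_all

lemma matching_acceptable: "is_matching N \<Longrightarrow> (s, p) \<in> N \<Longrightarrow> acceptable S P A lec s p"
  unfolding matching_def by auto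

lemma matching_single_valued: "is_matching N \<Longrightarrow> single_valued N"
  unfolding matching_def single_valued_def by blast

lemma matching_project_capacity: "is_matching N \<Longrightarrow> card (students_of_p N p) \<le> c p"
  and matching_lecturer_capacity: "is_matching N \<Longrightarrow> card (students_of_l N lec k) \<le> d k"
  unfolding matching_def by blast+

lemma matching_finite: "is_matching N \<Longrightarrow> finite N"
proof (rule finite_subset)
  show "is_matching N \<Longrightarrow> N \<subseteq> S \<times> P"
    by (auto simp: acceptable_def dest: matching_acceptable)
  show "finite (S \<times> P)"
    using spa_instance unfolding spa_instance_def by simp
qed

lemma matching_students_of_l_subset: "is_matching N \<Longrightarrow> students_of_l N lec k \<subseteq> lec_list S P A lec k"
  by (auto simp: students_of_l_def acceptable_def dest: matching_acceptable)

lemma stable_imp_matching: "is_stable M \<Longrightarrow> is_matching M"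
  unfolding stable_def by simp

lemma lecturer_pref_asym: "p \<in> P \<Longrightarrow> lp (lec p) t s \<Longrightarrow> \<not> lp (lec p) s t"
  using strict_total_on_asym lecturer_pref lecturer_in_L by metis

lemma lecturer_prefers_if_not_prefers_to_worst:
  assumes "is_matching N" "X \<subseteq> students_of_l N lec k" "X \<noteq> {}" "k \<in> L"
    and "s \<in> lec_list S P A lec k" "s \<notin> X" "\<not> prefers_to_worst (lp k) s X" "t \<in> X"
  shows "lp k t s"
proof (rule not_prefers_to_worstD[OF lecturer_pref[OF \<open>k \<in> L\<close>]])
  show "finite X"
    using finite_subset[OF assms(2) finite_students_of_l[OF matching_finite[OF assms(1)]]] .
  show "X \<subseteq> lec_list S P A lec k"
    using assms(2) matching_students_of_l_subset[OF assms(1)] by blast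
qed (use assms in auto)

lemma stable_improves_cases:
  assumes M: "is_stable M" and acc: "acceptable S P A lec s p" and imp: "improves sp M s p"
  obtains (project_full) "card (students_of_p M p) = c p"
      "\<forall>t\<in>students_of_p M p. lp (lec p) t s"
    | (lecturer_full) "card (students_of_p M p) < c p"
      "card (students_of_l M lec (lec p)) = d (lec p)"
      "\<forall>t\<in>students_of_l M lec (lec p). lp (lec p) t s"
proof -
  define k where "k = lec p"
  define Mp where "Mp = students_of_p M p"
  define Ml where "Ml = students_of_l M lec k"
  have mM: "is_matching M"
    using M by (rule stable_imp_matching)
  have not_blocking: "\<not> ((card Mp < c p \<and> card Ml < d k) \<or>
      (card Mp < c p \<and> card Ml = d k \<and> s \<in> Ml) \<or>
      (card Mp < c p \<and> card Ml = d k \<and> prefers_to_worst (lp k) s Ml) \<or>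
      (card Mp = c p \<and> prefers_to_worst (lp k) s Mp))"
    using M acc imp unfolding stable_def blocking_def improves_def Let_def Mp_def Ml_def k_def
    by blast
  have pP: "p \<in> P" and kL: "k \<in> L" and s_list: "s \<in> lec_list S P A lec k"
    using acc lecturer_in_L unfolding acceptable_def k_def by auto
  have Mp_Ml: "Mp \<subseteq> Ml"
    unfolding Mp_def Ml_def k_def by (rule students_of_p_subset_students_of_l)
  note prefers = lecturer_prefers_if_not_prefers_to_worst[OF mM _ _ kL s_list]
  show thesis
  proof (cases "card Mp < c p")
    case True
    with not_blocking matching_lecturer_capacity[OF mM, of k] have Ml_full: "card Ml = d k" "s \<notin> Ml"
      unfolding Ml_def by auto
    then have "Ml \<noteq> {}"
      using lecturer_capacity_pos[OF kL] by auto
    with True Ml_full not_blocking have "\<forall>t\<in>Ml. lp k t s"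
      using prefers[of Ml] by (simp add: Ml_def)
    with True Ml_full show thesis
      using lecturer_full unfolding Mp_def Ml_def k_def by blast
  next
    case False
    with matching_project_capacity[OF mM, of p] have Mp_full: "card Mp = c p"
      unfolding Mp_def by simp
    then have "Mp \<noteq> {}"
      using project_capacity_pos[OF pP] by auto
    moreover have "s \<notin> Mp"
      using imp by (simp add: Mp_def students_of_p_def improves_def)
    ultimately have "\<forall>t\<in>Mp. lp k t s"
      using Mp_full not_blocking prefers[of Mp] Mp_Ml by (simp add: Ml_def)
    with Mp_full show thesis
      using project_full unfolding Mp_def k_def by blast
  qed
qed

lemma stable_improves_prefers_assigned:
  assumes "is_stable M" "acceptable S P A lec s p" "improves sp M s p" "t \<in> students_of_p M p"
  shows "lp (lec p) t s"
  using assms(1-3)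
proof (cases rule: stable_improves_cases)
  case project_full
  with assms(4) show ?thesis by blast
next
  case lecturer_full
  moreover have "t \<in> students_of_l M lec (lec p)"
    using assms(4) students_of_p_subset_students_of_l by fast
  ultimately show ?thesis by blast
qed

lemma stable_improves_project_full:
  assumes "is_stable M" "acceptable S P A lec s p" "improves sp M s p"
    and "v \<in> students_of_l M lec (lec p)" "lp (lec p) s v"
  shows "card (students_of_p M p) = c p"
  using assms(1-3)
proof (cases rule: stable_improves_cases)
  case lecturer_full
  with assms(4) have "lp (lec p) v s"
    by blast
  moreover have "p \<in> P"
    using assms(2) by (simp add: acceptable_def)
  ultimately show ?thesis
    using lecturer_pref_asym assms(5) by metis
qed

lemma not_better_off_improves:
  assumes "is_matching M" "is_matching M'" "\<not> better_off sp M M' s" "(s, r) \<in> M" "(s, r) \<notin> M'"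
  shows "improves sp M' s r"
proof (cases "is_assigned M' s")
  case True
  then obtain q where q: "(s, q) \<in> M'"
    unfolding is_assigned_def by blast
  with assms have "q \<noteq> r" "(s, q) \<notin> M"
    using matching_single_valued[OF assms(1)] by (auto dest: single_valuedD)
  with q assms(3,4) have "\<not> sp s q r"
    unfolding better_off_def improves_def is_assigned_def by blast
  moreover have "s \<in> S" "r \<in> A s" "q \<in> A s"
    using matching_acceptable[OF assms(1,4)] matching_acceptable[OF assms(2) q]
    by (auto simp: acceptable_def)
  ultimately have "sp s r q"
    using strict_total_on_total[OF student_pref] \<open>q \<noteq> r\<close> by metis
  with q assms(5) show ?thesis
    unfolding improves_def by blast
next
  case False
  with assms(5) show ?thesis
    unfolding improves_def by blast
qed

lemma meet_leaver_better_off: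
  assumes "is_matching M" "is_matching M'" "(s, p) \<in> M" "(s, p) \<notin> meet_assignment sp M M'"
  shows "(s, p) \<notin> M'" and "better_off sp M M' s"
proof -
  from assms(3,4) show "(s, p) \<notin> M'"
    by (simp add: meet_assignment_def)
  from assms(3,4) obtain q where q: "(s, q) \<in> M'" "\<not> sp s p q"
    by (auto simp: meet_assignment_def is_assigned_def)
  with \<open>(s, p) \<notin> M'\<close> have "q \<noteq> p"
    by blast
  with assms(3) have "(s, q) \<notin> M"
    using matching_single_valued[OF assms(1)] by (auto dest: single_valuedD)
  have "s \<in> S" "p \<in> A s" "q \<in> A s"
    using matching_acceptable[OF assms(1,3)] matching_acceptable[OF assms(2) q(1)]
    by (auto simp: acceptable_def)
  with q \<open>q \<noteq> p\<close> have "sp s q p"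
    using strict_total_on_total[OF student_pref] by metis
  with q(1) assms(3) \<open>(s, q) \<notin> M\<close> show "better_off sp M M' s"
    unfolding better_off_def improves_def by blast
qed

end

locale spa_pair = spa +
  fixes M M'
  assumes stable_M: "stable S P A sp lec lp c d M"
    and stable_M': "stable S P A sp lec lp c d M'"
begin

lemma matching_M: "is_matching M" and matching_M': "is_matching M'"
  using stable_M stable_M' by (simp_all add: stable_imp_matching)

lemmas single_valued_M = matching_single_valued[OF matching_M]
  and single_valued_M' = matching_single_valued[OF matching_M']
  and finite_M = matching_finite[OF matching_M]
  and finite_M' = matching_finite[OF matching_M']

abbreviation better_off_students where
  "better_off_students \<equiv> {s. better_off sp M M' s}"

abbreviation better_off_at where
  "better_off_at N k \<equiv> better_off_students \<inter> students_of_l N lec k"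

definition exchange_at where
  "exchange_at p \<longleftrightarrow>
     (\<exists>s\<in>better_off_students. (s, p) \<in> M \<and> (s, p) \<notin> M') \<and>
     (\<exists>u. u \<notin> better_off_students \<and> (u, p) \<in> M' \<and> (u, p) \<notin> M)"

lemma finite_better_off_at: "finite N \<Longrightarrow> finite (better_off_at N k)"
  by (simp add: finite_students_of_l)

lemma leaver_better_off_if_arrival_better_off:
  assumes u: "(u, r) \<in> M'" "better_off sp M M' u" and t: "(t, r) \<in> M" "(t, r) \<notin> M'"
  shows "better_off sp M M' t"
proof (rule ccontr)
  have acc_t: "acceptable S P A lec t r" and acc_u: "acceptable S P A lec u r"
    using matching_acceptable[OF matching_M t(1)] matching_acceptable[OF matching_M' u(1)] .
  assume "\<not> better_off sp M M' t"
  then have "improves sp M' t r"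
    by (rule not_better_off_improves[OF matching_M matching_M' _ t])
  then have "lp (lec r) u t"
    using stable_improves_prefers_assigned[OF stable_M' acc_t] u(1) by (simp add: students_of_p_def)
  moreover have "improves sp M u r"
    using better_off_improves[OF single_valued_M' u(2,1)] .
  then have "lp (lec r) t u"
    using stable_improves_prefers_assigned[OF stable_M acc_u] t(1) by (simp add: students_of_p_def)
  ultimately show False
    using lecturer_pref_asym acc_t by (metis acceptable_def)
qed

lemma better_off_at_le_if_projects_full:
  assumes full: "\<And>v q. v \<in> better_off_students \<Longrightarrow> (v, q) \<in> M' \<Longrightarrow> lec q = k \<Longrightarrow>
      card (students_of_p M q) = c q"
  shows "card (better_off_at M' k) \<le> card (better_off_at M k)"
    and "exchange_at p \<Longrightarrow> lec p = k \<Longrightarrow> card (better_off_at M' k) < card (better_off_at M k)"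
proof -
  have moved: "\<forall>t\<in>better_off_at M' k. \<exists>r. (t, r) \<in> M' \<and> (t, r) \<notin> M \<and>
      card (students_of_p M' r) \<le> card (students_of_p M r) \<and>
      students_of_p M r - students_of_p M' r \<subseteq> better_off_at M k"
    (is "\<forall>t\<in>_. ?moved t")
  proof
    fix t assume t: "t \<in> better_off_at M' k"
    then obtain r where r: "(t, r) \<in> M'" "lec r = k"
      by (auto simp: students_of_l_def)
    from t have "better_off sp M M' t"
      by simp
    then have "(t, r) \<notin> M"
      using better_off_improves[OF single_valued_M' _ r(1)] by (simp add: improves_def)
    moreover have "card (students_of_p M' r) \<le> card (students_of_p M r)"
      using full[of t r] t r matching_project_capacity[OF matching_M'] by simp
    moreover have "students_of_p M r - students_of_p M' r \<subseteq> better_off_at M k"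
      using leaver_better_off_if_arrival_better_off[OF r(1) \<open>better_off sp M M' t\<close>] r(2)
      by (auto simp: students_of_p_def students_of_l_def)
    ultimately show "?moved t"
      using r(1) by blast
  qed
  note transfer = card_le_by_transfer[OF single_valued_M single_valued_M' finite_M finite_M'
      finite_better_off_at[OF finite_M] moved]
  show "card (better_off_at M' k) \<le> card (better_off_at M k)"
    by (rule transfer(1))
  assume "exchange_at p" "lec p = k"
  then obtain s u where "s \<in> better_off_students" "(s, p) \<in> M" "(s, p) \<notin> M'"
    and "u \<notin> better_off_students" "(u, p) \<in> M'" "(u, p) \<notin> M"
    unfolding exchange_at_def by blast
  with \<open>lec p = k\<close> show "card (better_off_at M' k) < card (better_off_at M k)"
    by (intro transfer(2)) (auto simp: students_of_l_def)
qed

lemma better_off_at_le_if_lecturer_full: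
  assumes v: "v \<in> better_off_students" "(v, q) \<in> M'" "lec q = k"
    "card (students_of_p M q) < c q"
  shows "card (better_off_at M' k) \<le> card (better_off_at M k)"
    and "exchange_at p \<Longrightarrow> lec p = k \<Longrightarrow> card (better_off_at M' k) < card (better_off_at M k)"
proof -
  from v(1) have "improves sp M v q"
    using better_off_improves[OF single_valued_M' _ v(2)] by simp
  with stable_M matching_acceptable[OF matching_M' v(2)]
  have "card (students_of_l M lec k) = d k \<and> (\<forall>t\<in>students_of_l M lec k. lp k t v)"
    by (cases rule: stable_improves_cases) (use v(3,4) in simp_all)
  then have k_full: "card (students_of_l M lec k) = d k" "\<forall>t\<in>students_of_l M lec k. lp k t v"
    by simp_all
  txt \<open>Compare the students of k who are not better off and change project: by the
    choice of v, every project of k such a student leaves is full in M', and nobody arriving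
    there is better off, so there are at least as many of them in M' as in M. As k is full
    in M, the better-off students of k in M' can be no more than those in M.\<close>
  define stay where "stay = {s. \<exists>r. (s, r) \<in> M \<and> (s, r) \<in> M' \<and> lec r = k}"
  define leave where "leave = students_of_l M lec k - better_off_students - stay"
  define arrive where "arrive = students_of_l M' lec k - better_off_students - stay"
  have moved: "\<forall>t\<in>leave. \<exists>r. (t, r) \<in> M \<and> (t, r) \<notin> M' \<and>
      card (students_of_p M r) \<le> card (students_of_p M' r) \<and>
      students_of_p M' r - students_of_p M r \<subseteq> arrive"
    (is "\<forall>t\<in>_. ?moved t")
  proof
    fix t assume t: "t \<in> leave"
    then obtain r where r: "(t, r) \<in> M" "lec r = k" "(t, r) \<notin> M'"
      by (auto simp: leave_def stay_def students_of_l_def)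
    from t have t_worse: "\<not> better_off sp M M' t"
      by (simp add: leave_def)
    have "card (students_of_p M' r) = c r"
    proof (rule stable_improves_project_full[OF stable_M' matching_acceptable[OF matching_M r(1)]])
      show "improves sp M' t r"
        by (rule not_better_off_improves[OF matching_M matching_M' t_worse r(1,3)])
      show "v \<in> students_of_l M' lec (lec r)"
        using v(2,3) r(2) by (auto simp: students_of_l_def)
      show "lp (lec r) t v"
        using k_full(2) t r(2) by (simp add: leave_def)
    qed
    then have "card (students_of_p M r) \<le> card (students_of_p M' r)"
      using matching_project_capacity[OF matching_M] by simp
    moreover have "students_of_p M' r - students_of_p M r \<subseteq> arrive"
      using leaver_better_off_if_arrival_better_off[OF _ _ r(1,3)] t_worse r(2) single_valued_M'
      by (auto simp: students_of_p_def arrive_def stay_def students_of_l_def dest: single_valuedD)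
    ultimately show "?moved t"
      using r(1,3) by blast
  qed
  note transfer = card_le_by_transfer[OF single_valued_M' single_valued_M finite_M' finite_M
      _ moved]
  have stay: "stay \<subseteq> students_of_l M lec k" "stay \<subseteq> students_of_l M' lec k"
    "stay \<inter> better_off_students = {}"
    using better_off_improves[OF single_valued_M']
    by (auto simp: stay_def students_of_l_def improves_def)
  have "card (students_of_l M' lec k) \<le> card (students_of_l M lec k)"
    using k_full(1) matching_lecturer_capacity[OF matching_M'] by simp
  then have counts: "card (better_off_at M' k) + card arrive \<le> card (better_off_at M k) + card leave"
    using card_Int_Diff_Diff[OF finite_students_of_l[OF finite_M] stay(1,3)]
      card_Int_Diff_Diff[OF finite_students_of_l[OF finite_M'] stay(2,3)]
    unfolding leave_def arrive_def by linarith
  have fin_arrive: "finite arrive"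
    by (simp add: arrive_def finite_students_of_l finite_M')
  show "card (better_off_at M' k) \<le> card (better_off_at M k)"
    using counts transfer(1)[OF fin_arrive] by linarith
  assume "exchange_at p" "lec p = k"
  then obtain s u where s: "s \<in> better_off_students" "(s, p) \<in> M" "(s, p) \<notin> M'"
    and u: "u \<notin> better_off_students" "(u, p) \<in> M'" "(u, p) \<notin> M"
    unfolding exchange_at_def by blast
  have "u \<in> arrive"
    using u \<open>lec p = k\<close> single_valued_M'
    by (auto simp: arrive_def stay_def students_of_l_def dest: single_valuedD)
  moreover have "s \<notin> leave"
    using s(1) by (simp add: leave_def)
  ultimately have "card leave < card arrive"
    using transfer(2)[OF fin_arrive s(2,3)] u(2,3) by blast
  with counts show "card (better_off_at M' k) < card (better_off_at M k)"
    by linarith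
qed

lemma better_off_at_le:
  shows "card (better_off_at M' k) \<le> card (better_off_at M k)"
    and "exchange_at p \<Longrightarrow> lec p = k \<Longrightarrow> card (better_off_at M' k) < card (better_off_at M k)"
proof -
  consider (lecturer_full) v q where "v \<in> better_off_students" "(v, q) \<in> M'" "lec q = k"
      "card (students_of_p M q) < c q"
    | (projects_full) "\<And>v q. v \<in> better_off_students \<Longrightarrow> (v, q) \<in> M' \<Longrightarrow> lec q = k \<Longrightarrow>
        card (students_of_p M q) = c q"
    using matching_project_capacity[OF matching_M] by (metis le_neq_implies_less)
  note full = this
  from full show "card (better_off_at M' k) \<le> card (better_off_at M k)"
  proof cases
    case lecturer_full
    then show ?thesis by (rule better_off_at_le_if_lecturer_full(1))
  next
    case projects_full
    then show ?thesis by (rule better_off_at_le_if_projects_full(1))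
  qed
  assume exchange: "exchange_at p" "lec p = k"
  from full show "card (better_off_at M' k) < card (better_off_at M k)"
  proof cases
    case lecturer_full
    then show ?thesis using exchange by (rule better_off_at_le_if_lecturer_full(2))
  next
    case projects_full
    then show ?thesis using exchange by (rule better_off_at_le_if_projects_full(2))
  qed
qed

lemma better_off_at_card_eq:
  assumes "k \<in> L"
  shows "card (better_off_at M' k) = card (better_off_at M k)"
proof (rule ccontr)
  assume "card (better_off_at M' k) \<noteq> card (better_off_at M k)"
  with better_off_at_le(1)[of k] have less: "card (better_off_at M' k) < card (better_off_at M k)"
    by simp
  have lecturers: "lec p \<in> L" if "is_matching N" "(s, p) \<in> N" for N s p
    using matching_acceptable[OF that] lecturer_in_L by (simp add: acceptable_def)
  have assigned_M': "better_off_students \<subseteq> Domain M'"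
    by (auto simp: better_off_def)
  have "card better_off_students = card (better_off_students \<inter> Domain M')"
    using assigned_M' by (simp add: Int_absorb2)
  also have "\<dots> = (\<Sum>k\<in>L. card (better_off_at M' k))"
    using sum_card_students_of_l[OF single_valued_M' finite_M' finite_L lecturers[OF matching_M']]
    by simp
  also have "\<dots> < (\<Sum>k\<in>L. card (better_off_at M k))"
    using finite_L better_off_at_le(1) less assms by (intro sum_strict_mono_ex1) auto
  also have "\<dots> = card (better_off_students \<inter> Domain M)"
    using sum_card_students_of_l[OF single_valued_M finite_M finite_L lecturers[OF matching_M]] .
  also have "\<dots> \<le> card better_off_students"
    using assigned_M' finite_Domain[OF finite_M'] by (intro card_mono) (auto intro: finite_subset)
  finally show False
    by simp
qed

lemma exchange_at_if_meet_undersubscribed: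
  assumes "card (students_of_p M p) = c p" "card (students_of_p M' p) = c p"
    and "card (students_of_p (meet_assignment sp M M') p) < c p"
  shows "exchange_at p"
proof -
  let ?W = "students_of_p (meet_assignment sp M M') p"
  have "finite (meet_assignment sp M M')"
    using finite_subset[OF meet_assignment_subset] finite_M finite_M' by blast
  then have "finite ?W"
    by (rule finite_students_of_p)
  with assms have "\<not> students_of_p M p \<subseteq> ?W" "\<not> students_of_p M' p \<subseteq> ?W"
    using card_mono by (metis not_le)+
  then obtain s u where "(s, p) \<in> M" "(s, p) \<notin> meet_assignment sp M M'"
    and "(u, p) \<in> M'" "(u, p) \<notin> meet_assignment sp M M'"
    by (auto simp: students_of_p_def)
  then show ?thesis
    using meet_leaver_better_off[OF matching_M matching_M']
      meet_leaver_not_better_off[OF single_valued_M single_valued_M']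
    unfolding exchange_at_def by blast
qed

end

theorem lemma6:
  assumes inst: "spa_instance S P L A sp lec lp c d"
    and stM: "stable S P A sp lec lp c d M"
    and stM': "stable S P A sp lec lp c d M'"
    and pj: "p \<in> P"
    and under: "card (students_of_p (meet_assignment sp M M') p) < c p"
  shows "card (students_of_p M p) < c p \<or> card (students_of_p M' p) < c p"
proof -
  interpret spa_pair S P L A sp lec lp c d M M'
    using inst stM stM' by (simp add: spa_pair_def spa_pair_axioms_def spa_def)
  show ?thesis
  proof (rule ccontr)
    assume "\<not> ?thesis"
    then have "card (students_of_p M p) = c p" "card (students_of_p M' p) = c p"
      using matching_project_capacity[OF matching_M, of p]
        matching_project_capacity[OF matching_M', of p] by simp_all
    then have "exchange_at p"
      using under by (rule exchange_at_if_meet_undersubscribed)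
    then have "card (better_off_at M' (lec p)) < card (better_off_at M (lec p))"
      by (rule better_off_at_le(2)) (rule refl)
    with better_off_at_card_eq[OF lecturer_in_L[OF pj]] show False
      by simp
  qed
qed

end
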